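(* The Chabauty space $\mathcal{C}(\mathbf{Z}^2)$ is homeomorphic to $\overline{\mathbf{N}}^2$.
   Context: For a discrete group $G$, $\mathcal{C}(G)$ is the set of subgroups of $G$ with the Chabauty topology (the topology induced by the product topology on $\{0,1\}^G$). $\overline{\mathbf{N}}=\mathbf{N}\cup\{\infty\}$ is the one-point compactification of $\mathbf{N}$. *)

theory Defs
  imports "HOL-Analysis.Analysis"
begin

definition add_subgroup :: "'a::ab_group_add set \<Rightarrow> bool" where
  "add_subgroup H \<longleftrightarrow> 0 \<in> H \<and> (\<forall>x\<in>H. \<forall>y\<in>H. x + y \<in> H) \<and> (\<forall>x\<in>H. - x \<in> H)"

text \<open>Chabauty space of a discrete group G: the set of subgroups, identified with their
  indicator functions G \<Rightarrow> bool, with the topology induced by the product topology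
  on {0,1}^G (each factor discrete).\<close>
definition chabauty :: "('a::ab_group_add \<Rightarrow> bool) topology" where
  "chabauty = subtopology (product_topology (\<lambda>_. discrete_topology (UNIV :: bool set)) UNIV)
                          {f. add_subgroup {x. f x}}"

end

theory Submission
  imports Defs
begin

text \<open>
  Order the nonzero vectors of \<open>\<int>\<^sup>2\<close> by Euclidean norm, breaking ties
  lexicographically, and sort the nontrivial subgroups by their least nonzero element \<open>w\<close>.
  The subgroups with least element \<open>w\<close> form a clopen set, since this condition only
  involves the finitely many vectors not larger than \<open>w\<close>. Apart from the cyclic group
  generated by \<open>w\<close>, each of them has full rank; a full-rank subgroup contains
  \<open>d\<int>\<^sup>2\<close> for \<open>d = |det(u, v)|\<close>, so it is determined by finitely many
  coordinates and is an isolated point. Each piece is therefore a countably infinite compact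
  Hausdorff space with a single non-isolated point, i.e. a copy of \<open>\<nat>\<^sub>\<infinity>\<close>,
  and the pieces accumulate only at the trivial subgroup. The same picture describes
  \<open>\<nat>\<^sub>\<infinity>\<^sup>2\<close>, cut into the rows \<open>{k} \<times> [k, \<infinity>]\<close> and the columns
  \<open>(k, \<infinity>] \<times> {k}\<close> around the point \<open>(\<infinity>, \<infinity>)\<close>, and gluing the pieces
  gives the homeomorphism.
\<close>

section \<open>Gluing homeomorphisms at a point\<close>

lemma Hausdorff_space_euclidean_t2: "Hausdorff_space (euclidean :: 'a::t2_space topology)"
  unfolding Hausdorff_space_def disjnt_def using hausdorff by auto

lemma compactin_isolated_imp_finite:
  assumes "compactin X K" and "\<And>x. x \<in> K \<Longrightarrow> openin X {x}"
  shows "finite K"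
proof -
  have "K \<inter> X derived_set_of K = {}"
    using assms(2) by (fastforce simp: in_derived_set_of)
  then show ?thesis
    using assms(1) discrete_compactin_eq_finite by blast
qed

lemma homeomorphic_space_singletons:
  assumes "a \<in> topspace X" and "b \<in> topspace Y"
  shows "subtopology X {a} homeomorphic_space subtopology Y {b}"
proof -
  have "homeomorphic_maps (discrete_topology {a}) (discrete_topology {b}) (\<lambda>_. b) (\<lambda>_. a)"
    by (auto simp: homeomorphic_maps_def)
  moreover have "subtopology X {a} = discrete_topology {a}" "subtopology Y {b} = discrete_topology {b}"
    using assms by (simp_all add: subtopology_eq_discrete_topology_sing)
  ultimately show ?thesis
    using homeomorphic_maps_imp_homeomorphic_space by fastforce
qed

lemma openin_preimage_glue_at_point:
  assumes Xs_closed: "\<And>i. closedin X (Xs i)" and top_X: "topspace X = insert p (\<Union>i. Xs i)"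
    and H_p: "H p \<in> V" and H_Ys: "\<And>i x. x \<in> Xs i \<Longrightarrow> H x \<in> Ys i"
    and finite: "finite {i. \<not> Ys i \<subseteq> V}"
    and piece_preimage: "\<And>i. openin X {x \<in> Xs i. H x \<in> V}"
  shows "openin X {x \<in> topspace X. H x \<in> V}"
proof -
  define F where "F = {i. \<not> Ys i \<subseteq> V}"
  have "H x \<in> V" if "x \<in> topspace X - (\<Union>i\<in>F. Xs i)" for x
  proof -
    from that top_X consider "x = p" | i where "x \<in> Xs i" "i \<notin> F"
      by blast
    then show ?thesis
      using H_p H_Ys unfolding F_def by cases blast+
  qed
  then have preimage_eq: "{x \<in> topspace X. H x \<in> V}
      = (\<Union>i\<in>F. {x \<in> Xs i. H x \<in> V}) \<union> (topspace X - (\<Union>i\<in>F. Xs i))"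
    using top_X by auto
  have "closedin X (\<Union>i\<in>F. Xs i)"
    using finite Xs_closed unfolding F_def by (intro closedin_Union) auto
  then show ?thesis
    unfolding preimage_eq using piece_preimage by (intro openin_Un openin_diff openin_Union) auto
qed

lemma continuous_map_glue_at_point:
  fixes Xs :: "'i \<Rightarrow> 'a set" and Ys :: "'i \<Rightarrow> 'b set"
  assumes Xs_open: "\<And>i. openin X (Xs i)" and Xs_closed: "\<And>i. closedin X (Xs i)"
    and top_X: "topspace X = insert p (\<Union>i. Xs i)"
    and q: "q \<in> topspace Y" and H_p: "H p = q" and H_Ys: "\<And>i x. x \<in> Xs i \<Longrightarrow> H x \<in> Ys i"
    and Ys_tendsto: "\<And>V. openin Y V \<Longrightarrow> q \<in> V \<Longrightarrow> finite {i. \<not> Ys i \<subseteq> V}"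
    and H_cont: "\<And>i. continuous_map (subtopology X (Xs i)) Y H"
  shows "continuous_map X Y H"
proof -
  have Xs_sub: "Xs i \<subseteq> topspace X" for i
    using top_X by blast
  have piece_preimage: "openin X {x \<in> Xs i. H x \<in> V}" if "openin Y V" for i V
  proof -
    have "openin (subtopology X (Xs i)) {x \<in> Xs i. H x \<in> V}"
      using openin_continuous_map_preimage[OF H_cont that] Xs_sub by (simp add: Int_absorb1)
    then show ?thesis
      using openin_trans_full Xs_open by metis
  qed
  have H_top: "H x \<in> topspace Y" if "x \<in> Xs i" for x i
    using continuous_map_image_subset_topspace[OF H_cont] that Xs_sub by (auto simp: Int_absorb1)
  have "H \<in> topspace X \<rightarrow> topspace Y"
  proof
    fix x
    assume "x \<in> topspace X"
    then consider "x = p" | i where "x \<in> Xs i"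
      using top_X by blast
    then show "H x \<in> topspace Y"
      using H_p q H_top by cases simp_all
  qed
  moreover have "openin X {x \<in> topspace X. H x \<in> V}" if V: "openin Y V" for V
  proof (cases "q \<in> V")
    case False
    then have "{x \<in> topspace X. H x \<in> V} = (\<Union>i. {x \<in> Xs i. H x \<in> V})"
      using top_X H_p by auto
    then show ?thesis
      using piece_preimage V by auto
  next
    case True
    then have "H p \<in> V"
      using H_p by simp
    then show ?thesis
      by (intro openin_preimage_glue_at_point[OF Xs_closed top_X _ H_Ys Ys_tendsto[OF V True]]
          piece_preimage[OF V])
  qed
  ultimately show ?thesis
    unfolding continuous_map_def by blast
qed

lemma inj_on_glue_at_point:
  assumes Ys_disj: "disjoint_family Ys" and H_inj: "\<And>i. inj_on H (Xs i)"
    and H_image: "\<And>i. H ` Xs i = Ys i" and H_p: "H p \<notin> (\<Union>i. Ys i)"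
  shows "inj_on H (insert p (\<Union>i. Xs i))"
proof -
  have "inj_on H (\<Union>i. Xs i)"
  proof (rule inj_onI)
    fix x y
    assume "x \<in> (\<Union>i. Xs i)" "y \<in> (\<Union>i. Xs i)" and H_eq: "H x = H y"
    then obtain i j where x: "x \<in> Xs i" and y: "y \<in> Xs j"
      by blast
    have "H x \<in> Ys i"
      unfolding H_image[of i, symmetric] using x by (rule imageI)
    moreover have "H x \<in> Ys j"
      unfolding H_eq H_image[of j, symmetric] using y by (rule imageI)
    ultimately have "i = j"
      using Ys_disj unfolding disjoint_family_on_def by blast
    then show "x = y"
      using H_inj[of i] x y H_eq by (simp add: inj_on_eq_iff)
  qed
  moreover have "H ` (\<Union>i. Xs i) = (\<Union>i. Ys i)"
    by (simp only: image_UN H_image)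
  then have "H p \<notin> H ` ((\<Union>i. Xs i) - {p})"
    using H_p by blast
  ultimately show ?thesis
    by simp
qed

lemma homeomorphic_map_glue_at_point:
  fixes Xs :: "'i \<Rightarrow> 'a set" and Ys :: "'i \<Rightarrow> 'b set"
  assumes X: "compact_space X" and Y: "Hausdorff_space Y"
    and p: "p \<in> topspace X" and q: "q \<in> topspace Y"
    and Xs_open: "\<And>i. openin X (Xs i)" and Xs_closed: "\<And>i. closedin X (Xs i)"
    and Xs_Un: "(\<Union>i. Xs i) = topspace X - {p}"
    and Ys_disj: "disjoint_family Ys" and Ys_Un: "(\<Union>i. Ys i) = topspace Y - {q}"
    and Ys_tendsto: "\<And>V. openin Y V \<Longrightarrow> q \<in> V \<Longrightarrow> finite {i. \<not> Ys i \<subseteq> V}"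
    and H_p: "H p = q"
    and H_hom: "\<And>i. homeomorphic_map (subtopology X (Xs i)) (subtopology Y (Ys i)) H"
  shows "homeomorphic_map X Y H"
proof -
  have top_X: "topspace X = insert p (\<Union>i. Xs i)" and top_Y: "topspace Y = insert q (\<Union>i. Ys i)"
    using Xs_Un Ys_Un p q by blast+
  have Xs_sub: "Xs i \<subseteq> topspace X" and Ys_sub: "Ys i \<subseteq> topspace Y" for i
    using Xs_Un Ys_Un by blast+
  have H_image: "H ` Xs i = Ys i" for i
    using homeomorphic_imp_surjective_map[OF H_hom] Xs_sub Ys_sub by (simp add: Int_absorb1)
  have surj: "H ` topspace X = topspace Y"
    by (simp only: top_X top_Y image_insert image_UN H_image H_p)
  have H_inj: "inj_on H (Xs i)" for i
    using homeomorphic_imp_injective_map[OF H_hom] Xs_sub by (simp add: Int_absorb1)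
  have inj: "inj_on H (topspace X)"
    unfolding top_X by (rule inj_on_glue_at_point[OF Ys_disj H_inj H_image]) (simp add: H_p Ys_Un)
  have "continuous_map X Y H"
  proof (rule continuous_map_glue_at_point[where H = H, OF Xs_open Xs_closed top_X q H_p _ Ys_tendsto])
    show "H x \<in> Ys i" if "x \<in> Xs i" for i x
      unfolding H_image[of i, symmetric] using that by (rule imageI)
    show "continuous_map (subtopology X (Xs i)) Y H" for i
      using homeomorphic_imp_continuous_map[OF H_hom] continuous_map_in_subtopology by blast
  qed
  then show ?thesis
    using continuous_imp_homeomorphic_map[OF _ X Y surj inj] by blast
qed

lemma homeomorphic_space_glue_at_point:
  fixes Xs :: "'i \<Rightarrow> 'a set" and Ys :: "'i \<Rightarrow> 'b set"
  assumes X: "compact_space X" and Y: "Hausdorff_space Y"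
    and p: "p \<in> topspace X" and q: "q \<in> topspace Y"
    and Xs_open: "\<And>i. openin X (Xs i)" and Xs_closed: "\<And>i. closedin X (Xs i)"
    and Xs_disj: "disjoint_family Xs" and Xs_Un: "(\<Union>i. Xs i) = topspace X - {p}"
    and Ys_disj: "disjoint_family Ys" and Ys_Un: "(\<Union>i. Ys i) = topspace Y - {q}"
    and Ys_tendsto: "\<And>V. openin Y V \<Longrightarrow> q \<in> V \<Longrightarrow> finite {i. \<not> Ys i \<subseteq> V}"
    and hom: "\<And>i. subtopology X (Xs i) homeomorphic_space subtopology Y (Ys i)"
  shows "X homeomorphic_space Y"
proof -
  obtain h where h: "\<And>i. homeomorphic_map (subtopology X (Xs i)) (subtopology Y (Ys i)) (h i)"
    using hom unfolding homeomorphic_space by metis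
  define H where "H x = (if x = p then q else h (THE i. x \<in> Xs i) x)" for x
  have "homeomorphic_map (subtopology X (Xs i)) (subtopology Y (Ys i)) H" for i
  proof (rule homeomorphic_map_eq[OF h])
    fix x
    assume "x \<in> topspace (subtopology X (Xs i))"
    then have "x \<in> Xs i"
      by simp
    then have "(THE i. x \<in> Xs i) = i" and "x \<noteq> p"
      using Xs_disj Xs_Un by (auto simp: disjoint_family_on_def)
    then show "h i x = H x"
      by (simp add: H_def)
  qed
  moreover have "H p = q"
    by (simp add: H_def)
  ultimately have "homeomorphic_map X Y H"
    using homeomorphic_map_glue_at_point[OF X Y p q Xs_open Xs_closed Xs_Un Ys_disj Ys_Un Ys_tendsto]
    by blast
  then show ?thesis
    using homeomorphic_space by blast
qed

lemma homeomorphic_space_enat: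
  assumes "compact_space X" and "Hausdorff_space X" and q: "q \<in> topspace X"
    and "countable (topspace X)" and "infinite (topspace X)"
    and isolated: "\<And>x. x \<in> topspace X \<Longrightarrow> x \<noteq> q \<Longrightarrow> openin X {x}"
  shows "(euclidean :: enat topology) homeomorphic_space X"
proof -
  define e where "e = from_nat_into (topspace X - {q})"
  have e: "bij_betw e UNIV (topspace X - {q})"
    unfolding e_def using assms by (intro bij_betw_from_nat_into) auto
  txt \<open>Glue the points \<open>n\<close> of \<open>\<nat>\<^sub>\<infinity>\<close> to the isolated points of \<open>X\<close>; they tend to
    \<open>q\<close> because a compact set of isolated points is finite.\<close>
  show ?thesis
  proof (rule homeomorphic_space_glue_at_point
      [where p = \<infinity> and q = q and Xs = "\<lambda>n. {enat n}" and Ys = "\<lambda>n. {e n}"])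
    show "compact_space (euclidean :: enat topology)"
      using compact_UNIV by (simp add: compact_space_def)
    show "(\<Union>n. {enat n}) = topspace euclidean - {\<infinity>}"
      by auto
    show "(\<Union>n. {e n}) = topspace X - {q}"
      using e by (auto simp: bij_betw_def)
    show "disjoint_family (\<lambda>n. {e n})"
      using e by (auto simp: disjoint_family_on_def bij_betw_def inj_eq)
    show "finite {n. \<not> {e n} \<subseteq> V}" if "openin X V" "q \<in> V" for V
    proof -
      have "compactin X (topspace X - V)"
        using that assms(1) by (simp add: closedin_compact_space closedin_diff)
      then have "finite (topspace X - V)"
        using compactin_isolated_imp_finite isolated that(2) by blast
      moreover have "{n. \<not> {e n} \<subseteq> V} = e -` (topspace X - V)"
        using e bij_betwE by fastforce
      moreover have "inj e"
        using e by (simp add: bij_betw_def)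
      ultimately show ?thesis
        by (simp add: finite_vimageI)
    qed
    show "subtopology euclidean {enat n} homeomorphic_space subtopology X {e n}" for n
      using e by (intro homeomorphic_space_singletons) (auto simp: bij_betw_def)
    show "disjoint_family (\<lambda>n. {enat n})"
      by (auto simp: disjoint_family_on_def)
    show "openin euclidean {enat n}" "closedin euclidean {enat n}" for n
      by (simp_all add: open_enat)
  qed (use assms in simp_all)
qed

section \<open>The space \<open>\<nat>\<^sub>\<infinity>\<^sup>2\<close>\<close>

lemma homeomorphic_space_enat_subset_enat2:
  fixes S :: "(enat \<times> enat) set"
  assumes "closed S" and "infinite S" and "q \<in> S"
    and finite_coords: "S - {q} \<subseteq> range enat \<times> range enat"
  shows "(euclidean :: enat topology) homeomorphic_space subtopology euclidean S"
proof (rule homeomorphic_space_enat[where q = q])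
  have "compact (UNIV \<times> UNIV :: (enat \<times> enat) set)"
    by (intro compact_Times compact_UNIV)
  then have "compact S"
    using compact_Int_closed assms(1) by fastforce
  then show "compact_space (subtopology euclidean S)"
    by (simp add: compact_space_subtopology)
  show "Hausdorff_space (subtopology euclidean S)"
    by (simp add: Hausdorff_space_subtopology Hausdorff_space_euclidean_t2)
  show "openin (subtopology euclidean S) {x}"
    if "x \<in> topspace (subtopology euclidean S)" "x \<noteq> q" for x
  proof -
    have "x \<in> range enat \<times> range enat"
      using that finite_coords by auto
    then obtain a b where x: "x = (enat a, enat b)"
      by blast
    have "open {(enat a, enat b)}"
      using open_Times[OF open_enat open_enat] by simp
    then have "openin (subtopology euclidean S) (S \<inter> {(enat a, enat b)})"
      by (simp add: openin_subtopology_Int2)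
    moreover have "S \<inter> {(enat a, enat b)} = {x}"
      using that x by auto
    ultimately show ?thesis
      by simp
  qed
qed (use assms in simp_all)

lemma infinite_atLeast_enat: "infinite {enat k..}"
proof
  assume "finite {enat k..}"
  then have "finite (enat ` {k..})"
    by (rule finite_subset[rotated]) auto
  moreover have "inj enat"
    by (rule injI) simp
  ultimately show False
    by (simp add: finite_image_iff inj_on_subset infinite_Ici)
qed

definition enat2_piece :: "nat \<Rightarrow> (enat \<times> enat) set" where
  "enat2_piece n = (let k = n div 2 in
     if even n then {enat k} \<times> {enat k..} else {enat (Suc k)..} \<times> {enat k})"

lemma homeomorphic_space_enat2_piece:
  "(euclidean :: enat topology) homeomorphic_space subtopology euclidean (enat2_piece n)"
proof (rule homeomorphic_space_enat_subset_enat2)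
  define k where "k = n div 2"
  let ?q = "if even n then (enat k, \<infinity>) else (\<infinity>, enat k)"
  show "closed (enat2_piece n)"
    by (simp add: enat2_piece_def Let_def closed_Times)
  show "?q \<in> enat2_piece n"
    by (simp add: enat2_piece_def k_def Let_def)
  show "enat2_piece n - {?q} \<subseteq> range enat \<times> range enat"
    by (auto simp: enat2_piece_def k_def Let_def image_iff)
  show "infinite (enat2_piece n)"
    by (simp add: enat2_piece_def Let_def finite_cartesian_product_iff infinite_atLeast_enat)
qed

lemma enat2_piece_disjoint: "disjoint_family enat2_piece"
  unfolding disjoint_family_on_def
proof (intro ballI impI)
  fix m n :: nat
  assume "m \<noteq> n"
  then have "m div 2 \<noteq> n div 2 \<or> even m \<noteq> even n"
    by (metis even_two_times_div_two odd_two_times_div_two_succ)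
  then show "enat2_piece m \<inter> enat2_piece n = {}"
    by (auto simp: enat2_piece_def Let_def)
qed

lemma Union_enat2_piece: "(\<Union>n. enat2_piece n) = UNIV - {(\<infinity>, \<infinity>)}"
proof (intro equalityI subsetI)
  fix x
  assume "x \<in> (\<Union>n. enat2_piece n)"
  then show "x \<in> UNIV - {(\<infinity>, \<infinity>)}"
    by (auto simp: enat2_piece_def Let_def split: if_splits)
next
  fix x :: "enat \<times> enat"
  assume x: "x \<in> UNIV - {(\<infinity>, \<infinity>)}"
  obtain a b where ab: "x = (a, b)"
    by (cases x)
  show "x \<in> (\<Union>n. enat2_piece n)"
  proof (cases "a \<le> b")
    case True
    then obtain k where "a = enat k"
      using x ab by (cases a) auto
    then have "x \<in> enat2_piece (2 * k)"
      using ab True by (simp add: enat2_piece_def)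
    then show ?thesis
      by blast
  next
    case False
    then obtain k where "b = enat k"
      by (cases b) auto
    then have "x \<in> enat2_piece (2 * k + 1)"
      using ab False by (simp add: enat2_piece_def Suc_ile_eq)
    then show ?thesis
      by blast
  qed
qed

lemma enat2_piece_tendsto:
  assumes "open V" and "(\<infinity>, \<infinity>) \<in> V"
  shows "finite {n. \<not> enat2_piece n \<subseteq> V}"
proof -
  obtain A B where AB: "open A" "open B" "(\<infinity>, \<infinity>) \<in> A \<times> B" "A \<times> B \<subseteq> V"
    using open_prod_elim[OF assms] .
  obtain a :: nat where a: "{enat a<..} \<subseteq> A"
    using AB(1,3) open_enat_iff by auto
  obtain b :: nat where b: "{enat b<..} \<subseteq> B"
    using AB(2,3) open_enat_iff by auto
  have in_V: "(x, y) \<in> V" if "enat a < x" "enat b < y" for x y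
    using that a b AB(4) by blast
  have piece_ge: "enat (n div 2) \<le> x \<and> enat (n div 2) \<le> y" if "(x, y) \<in> enat2_piece n" for n x y
    using that by (auto simp: enat2_piece_def Let_def Suc_ile_eq less_imp_le split: if_splits)
  have "{n. \<not> enat2_piece n \<subseteq> V} \<subseteq> {..<2 * Suc (a + b)}"
  proof
    fix n
    assume "n \<in> {n. \<not> enat2_piece n \<subseteq> V}"
    then obtain x y where "(x, y) \<in> enat2_piece n" "(x, y) \<notin> V"
      by auto
    then have "\<not> (enat a < enat (n div 2) \<and> enat b < enat (n div 2))"
      using piece_ge in_V less_le_trans by blast
    then show "n \<in> {..<2 * Suc (a + b)}"
      by auto
  qed
  then show ?thesis
    using finite_subset by blast
qed

section \<open>Chabauty spaces\<close>

lemma add_subgroup_add: "add_subgroup H \<Longrightarrow> x \<in> H \<Longrightarrow> y \<in> H \<Longrightarrow> x + y \<in> H"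
  by (simp add: add_subgroup_def)

lemma add_subgroup_uminus: "add_subgroup H \<Longrightarrow> x \<in> H \<Longrightarrow> - x \<in> H"
  by (simp add: add_subgroup_def)

lemma add_subgroup_diff: "add_subgroup H \<Longrightarrow> x \<in> H \<Longrightarrow> y \<in> H \<Longrightarrow> x - y \<in> H"
  unfolding add_subgroup_def by (metis diff_conv_add_uminus)

abbreviation bool_product_topology :: "('a \<Rightarrow> bool) topology" where
  "bool_product_topology \<equiv> product_topology (\<lambda>_. discrete_topology UNIV) UNIV"

lemma topspace_chabauty: "topspace chabauty = {f. add_subgroup {x. f x}}"
  by (simp add: chabauty_def)

lemma cylinder_eq_PiE: "{f. \<forall>z\<in>A. f z = c z} = (\<Pi>\<^sub>E z\<in>UNIV. if z \<in> A then {c z} else UNIV)"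
  by (auto simp: PiE_def Pi_def)

lemma closedin_bool_product_cylinder: "closedin bool_product_topology {f. \<forall>z\<in>A. f z = c z}"
  by (simp add: cylinder_eq_PiE closedin_product_topology)

lemma openin_bool_product_cylinder:
  assumes "finite A"
  shows "openin bool_product_topology {f. \<forall>z\<in>A. f z = c z}"
proof -
  have "{z. (if z \<in> A then {c z} else UNIV) \<noteq> UNIV} \<subseteq> A"
    by auto
  then show ?thesis
    using assms by (simp add: cylinder_eq_PiE openin_PiE_gen finite_subset)
qed

lemma closedin_bool_product_coordinate:
  "closedin bool_product_topology {f. f z}" "closedin bool_product_topology {f. \<not> f z}"
  using closedin_bool_product_cylinder[of "{z}" "\<lambda>_. True"]
    closedin_bool_product_cylinder[of "{z}" "\<lambda>_. False"] by simp_all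

lemma closedin_add_subgroups:
  "closedin bool_product_topology {f :: 'a::ab_group_add \<Rightarrow> bool. add_subgroup {x. f x}}"
proof -
  have "{f :: 'a \<Rightarrow> bool. add_subgroup {x. f x}} = {f. f 0}
      \<inter> (\<Inter>p. {f. \<not> f (fst p)} \<union> {f. \<not> f (snd p)} \<union> {f. f (fst p + snd p)})
      \<inter> (\<Inter>x. {f. \<not> f x} \<union> {f. f (- x)})"
    by (auto simp: add_subgroup_def)
  then show ?thesis
    by (simp only:)
      (intro closedin_Int closedin_Un closedin_INT closedin_bool_product_coordinate UNIV_not_empty)
qed

lemma compact_space_chabauty: "compact_space chabauty"
proof -
  have "compact_space (bool_product_topology :: ('a::ab_group_add \<Rightarrow> bool) topology)"
    by (simp add: compact_space_product_topology compact_space_discrete_topology)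
  then show ?thesis
    unfolding chabauty_def
    by (intro compact_space_subtopology closedin_compact_space closedin_add_subgroups)
qed

lemma Hausdorff_space_chabauty: "Hausdorff_space chabauty"
  by (simp add: chabauty_def Hausdorff_space_subtopology Hausdorff_space_product_topology)

lemma chabauty_cylinder_eq:
  "{f \<in> topspace chabauty. \<forall>z\<in>A. f z = c z} = {f. add_subgroup {x. f x}} \<inter> {f. \<forall>z\<in>A. f z = c z}"
  by (auto simp: topspace_chabauty)

lemma openin_chabauty_cylinder:
  "finite A \<Longrightarrow> openin chabauty {f \<in> topspace chabauty. \<forall>z\<in>A. f z = c z}"
  unfolding chabauty_cylinder_eq unfolding chabauty_def
  by (intro openin_subtopology_Int2 openin_bool_product_cylinder)

lemma closedin_chabauty_cylinder: "closedin chabauty {f \<in> topspace chabauty. \<forall>z\<in>A. f z = c z}"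
  unfolding chabauty_cylinder_eq unfolding chabauty_def
  by (intro closedin_subtopology_Int_closed closedin_bool_product_cylinder)

section \<open>Subgroups of \<open>\<int>\<^sup>2\<close>\<close>

definition smul :: "int \<Rightarrow> int \<times> int \<Rightarrow> int \<times> int" where
  "smul k x = (k * fst x, k * snd x)"

definition sqnorm :: "int \<times> int \<Rightarrow> int" where
  "sqnorm x = (fst x)\<^sup>2 + (snd x)\<^sup>2"

definition det2 :: "int \<times> int \<Rightarrow> int \<times> int \<Rightarrow> int" where
  "det2 x y = fst x * snd y - snd x * fst y"

definition perp :: "int \<times> int \<Rightarrow> int \<times> int" where
  "perp x = (- snd x, fst x)"

definition norm_lex_less :: "int \<times> int \<Rightarrow> int \<times> int \<Rightarrow> bool" where
  "norm_lex_less x y \<longleftrightarrow> sqnorm x < sqnorm y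
     \<or> sqnorm x = sqnorm y \<and> (fst x < fst y \<or> fst x = fst y \<and> snd x < snd y)"

lemma smul_zero [simp]: "smul 0 x = 0"
  and smul_one [simp]: "smul 1 x = x"
  and smul_minus_one [simp]: "smul (- 1) x = - x"
  by (simp_all add: smul_def zero_prod_def prod_eq_iff)

lemma smul_add_left: "smul (a + b) x = smul a x + smul b x"
  by (simp add: smul_def algebra_simps)

lemma smul_minus_left: "smul (- a) x = - smul a x"
  by (simp add: smul_def)

lemma sqnorm_pos: "x \<noteq> 0 \<Longrightarrow> 0 < sqnorm x"
  by (cases x) (auto simp: sqnorm_def zero_prod_def add_pos_nonneg add_nonneg_pos)

lemma sqnorm_smul: "sqnorm (smul k x) = k\<^sup>2 * sqnorm x"
  by (simp add: smul_def sqnorm_def power_mult_distrib algebra_simps)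

lemma sqnorm_smul_add_smul_perp: "sqnorm (smul k w + smul j (perp w)) = (k\<^sup>2 + j\<^sup>2) * sqnorm w"
  by (simp add: smul_def sqnorm_def perp_def power2_eq_square algebra_simps)

lemma abs_le_square_int: "\<bar>a :: int\<bar> \<le> a\<^sup>2"
  by (metis abs_dvd_iff dvd_0_left_iff dvd_triv_left power2_eq_square
      zdvd_imp_le zero_le_power2 zero_less_power2)

lemma norm_lex_less_irrefl: "\<not> norm_lex_less x x"
  by (simp add: norm_lex_less_def)

lemma norm_lex_less_trans: "norm_lex_less x y \<Longrightarrow> norm_lex_less y z \<Longrightarrow> norm_lex_less x z"
  by (auto simp: norm_lex_less_def)

lemma norm_lex_less_linear: "x \<noteq> y \<Longrightarrow> norm_lex_less x y \<or> norm_lex_less y x"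
  by (cases x; cases y) (auto simp: norm_lex_less_def)

lemma norm_lex_less_imp_sqnorm_le: "norm_lex_less x y \<Longrightarrow> sqnorm x \<le> sqnorm y"
  by (auto simp: norm_lex_less_def)

lemma finite_norm_lex_less: "finite {y. norm_lex_less y w}"
proof -
  define M where "M = sqnorm w"
  have "\<bar>fst y\<bar> \<le> M \<and> \<bar>snd y\<bar> \<le> M" if "norm_lex_less y w" for y
  proof -
    have "(fst y)\<^sup>2 + (snd y)\<^sup>2 \<le> M"
      using norm_lex_less_imp_sqnorm_le[OF that] by (simp add: sqnorm_def M_def)
    then show ?thesis
      using abs_le_square_int[of "fst y"] abs_le_square_int[of "snd y"]
        zero_le_power2[of "fst y"] zero_le_power2[of "snd y"] by linarith
  qed
  then have "{y. norm_lex_less y w} \<subseteq> {-M..M} \<times> {-M..M}"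
    by (force simp: abs_le_iff)
  then show ?thesis
    by (rule finite_subset) simp
qed

lemma wf_norm_lex_less: "wf {(x, y). norm_lex_less x y}"
  by (rule wf_finite_segments)
    (auto simp: irrefl_def norm_lex_less_irrefl trans_def intro: norm_lex_less_trans finite_norm_lex_less)

lemma add_subgroup_smul:
  assumes H: "add_subgroup H" and x: "x \<in> H"
  shows "smul k x \<in> H"
proof -
  have nat: "smul (int n) x \<in> H" for n
  proof (induction n)
    case 0
    then show ?case
      using H by (simp add: add_subgroup_def)
  next
    case (Suc n)
    then show ?case
      using H x by (simp add: add_subgroup_def smul_add_left)
  qed
  show ?thesis
  proof (cases k rule: int_cases)
    case (nonneg n)
    then show ?thesis
      using nat by simp
  next
    case (neg n)
    then have "smul k x = - smul (int (Suc n)) x"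
      by (simp add: smul_minus_left[symmetric])
    then show ?thesis
      using H nat[of "Suc n"] unfolding add_subgroup_def by metis
  qed
qed

lemma add_subgroup_mod_iff:
  fixes D :: int
  assumes H: "add_subgroup H" and "(D, 0) \<in> H" and "(0, D) \<in> H"
  shows "x \<in> H \<longleftrightarrow> (fst x mod D, snd x mod D) \<in> H"
proof -
  have "(D * (fst x div D), D * (snd x div D)) = smul (fst x div D) (D, 0) + smul (snd x div D) (0, D)"
    by (simp add: smul_def)
  then have multiple: "(D * (fst x div D), D * (snd x div D)) \<in> H"
    using assms add_subgroup_smul add_subgroup_add by metis
  have "x = (fst x mod D, snd x mod D) + (D * (fst x div D), D * (snd x div D))"
    by (simp add: prod_eq_iff)
  then show ?thesis
    using H multiple add_subgroup_add add_subgroup_diff by (metis add_diff_cancel_right')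
qed

lemma add_subgroup_det_multiples:
  assumes H: "add_subgroup H" and "u \<in> H" and "v \<in> H"
  shows "(\<bar>det2 u v\<bar>, 0) \<in> H" and "(0, \<bar>det2 u v\<bar>) \<in> H"
proof -
  have "(det2 u v, 0) = smul (snd v) u - smul (snd u) v"
    and "(0, det2 u v) = smul (fst u) v - smul (fst v) u"
    by (simp_all add: smul_def det2_def algebra_simps)
  then have "(det2 u v, 0) \<in> H" and "(0, det2 u v) \<in> H"
    using assms add_subgroup_diff add_subgroup_smul by metis+
  moreover have "(\<bar>d\<bar>, 0) = smul (sgn d) (d, 0)" and "(0, \<bar>d\<bar>) = smul (sgn d) (0, d)" for d :: int
    by (simp_all add: smul_def abs_sgn mult.commute)
  ultimately show "(\<bar>det2 u v\<bar>, 0) \<in> H" and "(0, \<bar>det2 u v\<bar>) \<in> H"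
    using H add_subgroup_smul by metis+
qed

text \<open>For \<open>det2 u v = 0\<close> this holds trivially, as \<open>x mod 0 = x\<close>.\<close>
lemma add_subgroup_periodic:
  assumes "add_subgroup H" and "u \<in> H" and "v \<in> H"
  shows "x \<in> H \<longleftrightarrow> (fst x mod \<bar>det2 u v\<bar>, snd x mod \<bar>det2 u v\<bar>) \<in> H"
  using assms add_subgroup_mod_iff add_subgroup_det_multiples by blast

definition full_rank_subgroups :: "(int \<times> int \<Rightarrow> bool) set" where
  "full_rank_subgroups = {f \<in> topspace chabauty. \<exists>u v. f u \<and> f v \<and> det2 u v \<noteq> 0}"

lemma openin_chabauty_full_rank:
  assumes "f \<in> full_rank_subgroups"
  shows "openin chabauty {f}"
proof -
  obtain u v where f: "add_subgroup {x. f x}" "f u" "f v" "det2 u v \<noteq> 0"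
    using assms by (auto simp: full_rank_subgroups_def topspace_chabauty)
  define D where "D = \<bar>det2 u v\<bar>"
  define A where "A = insert u (insert v ({0..<D} \<times> {0..<D}))"
  have "{g \<in> topspace chabauty. \<forall>z\<in>A. g z = f z} = {f}"
  proof (intro equalityI subsetI)
    fix g
    assume "g \<in> {g \<in> topspace chabauty. \<forall>z\<in>A. g z = f z}"
    then have g: "add_subgroup {x. g x}" "g u" "g v" "\<forall>z\<in>{0..<D} \<times> {0..<D}. g z = f z"
      using f by (auto simp: A_def topspace_chabauty)
    have "g x = f x" for x
    proof -
      have "(fst x mod D, snd x mod D) \<in> {0..<D} \<times> {0..<D}"
        using f(4) by (simp add: D_def)
      then show ?thesis
        using add_subgroup_periodic[OF g(1), of u v x] add_subgroup_periodic[OF f(1), of u v x] f g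
        by (simp add: D_def)
    qed
    then show "g \<in> {f}"
      by auto
  qed (use assms in \<open>auto simp: full_rank_subgroups_def\<close>)
  moreover have "openin chabauty {g \<in> topspace chabauty. \<forall>z\<in>A. g z = f z}"
    by (rule openin_chabauty_cylinder) (simp add: A_def)
  ultimately show ?thesis
    by simp
qed

lemma countable_full_rank_subgroups: "countable full_rank_subgroups"
proof -
  define decode :: "int \<times> (int \<times> int) set \<Rightarrow> int \<times> int \<Rightarrow> bool"
    where "decode = (\<lambda>(D, S) x. (fst x mod D, snd x mod D) \<in> S)"
  have "full_rank_subgroups \<subseteq> decode ` (UNIV \<times> Collect finite)"
  proof
    fix f
    assume "f \<in> full_rank_subgroups"
    then obtain u v where f: "add_subgroup {x. f x}" "f u" "f v" "det2 u v \<noteq> 0"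
      by (auto simp: full_rank_subgroups_def topspace_chabauty)
    define D where "D = \<bar>det2 u v\<bar>"
    define S where "S = {z \<in> {0..<D} \<times> {0..<D}. f z}"
    have "f = decode (D, S)"
    proof
      fix x
      show "f x = decode (D, S) x"
        using add_subgroup_periodic[OF f(1), of u v x] f
        by (simp add: decode_def S_def D_def)
    qed
    moreover have "finite S"
      by (simp add: S_def)
    ultimately show "f \<in> decode ` (UNIV \<times> Collect finite)"
      by blast
  qed
  moreover have "countable (decode ` (UNIV \<times> Collect finite))"
    by (intro countable_image countable_SIGMA countable_Collect_finite) auto
  ultimately show ?thesis
    by (rule countable_subset)
qed

text \<open>A subgroup containing \<open>w\<close> also contains \<open>-w\<close>, so its least nonzero element
  lies in this half of \<open>\<int>\<^sup>2 - {0}\<close>.\<close>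
definition least_candidates :: "(int \<times> int) set" where
  "least_candidates = {w. w \<noteq> 0 \<and> norm_lex_less w (- w)}"

definition subgroups_with_least :: "int \<times> int \<Rightarrow> (int \<times> int \<Rightarrow> bool) set" where
  "subgroups_with_least w =
     {f \<in> topspace chabauty. f w \<and> (\<forall>y. y \<noteq> 0 \<and> norm_lex_less y w \<longrightarrow> \<not> f y)}"

text \<open>For \<open>n = 0\<close> this is the cyclic group generated by \<open>w\<close>.\<close>
definition sublattice :: "int \<times> int \<Rightarrow> nat \<Rightarrow> int \<times> int \<Rightarrow> bool" where
  "sublattice w n x \<longleftrightarrow> (\<exists>k m. x = smul k w + smul (m * int n) (perp w))"

lemma subgroups_with_least_eq_cylinder:
  "subgroups_with_least w =
     {f \<in> topspace chabauty. \<forall>z\<in>insert w {y. y \<noteq> 0 \<and> norm_lex_less y w}. f z = (z = w)}"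
  by (auto simp: subgroups_with_least_def norm_lex_less_irrefl)

lemma openin_subgroups_with_least: "openin chabauty (subgroups_with_least w)"
  unfolding subgroups_with_least_eq_cylinder
  by (rule openin_chabauty_cylinder) (simp add: finite_norm_lex_less)

lemma closedin_subgroups_with_least: "closedin chabauty (subgroups_with_least w)"
  unfolding subgroups_with_least_eq_cylinder by (rule closedin_chabauty_cylinder)

lemma subgroups_with_least_disjoint:
  assumes "w \<noteq> 0" and "w' \<noteq> 0" and "w \<noteq> w'"
  shows "subgroups_with_least w \<inter> subgroups_with_least w' = {}"
  using assms norm_lex_less_linear[of w w'] unfolding subgroups_with_least_def by blast

lemma zero_subgroup_notin_subgroups_with_least:
  "w \<noteq> 0 \<Longrightarrow> (\<lambda>x. x = 0) \<notin> subgroups_with_least w"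
  by (simp add: subgroups_with_least_def)

lemma in_subgroups_with_least:
  assumes f: "f \<in> topspace chabauty" and nonzero: "f \<noteq> (\<lambda>x. x = 0)"
  obtains w where "w \<in> least_candidates" and "f \<in> subgroups_with_least w"
proof -
  have H: "add_subgroup {x. f x}"
    using f by (simp add: topspace_chabauty)
  obtain x where "f x \<noteq> (x = 0)"
    using nonzero by blast
  moreover have "f 0"
    using H by (simp add: add_subgroup_def)
  ultimately have "x \<noteq> 0" "f x"
    by (cases "x = 0"; simp)+
  then obtain w where w_in: "w \<in> {x. x \<noteq> 0 \<and> f x}"
    and w_min: "\<And>y. (y, w) \<in> {(x, y). norm_lex_less x y} \<Longrightarrow> y \<notin> {x. x \<noteq> 0 \<and> f x}"
    using wfE_min[OF wf_norm_lex_less, of x "{x. x \<noteq> 0 \<and> f x}"] by blast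
  have w: "w \<noteq> 0" "f w"
    using w_in by simp_all
  have minimal: "\<not> f y" if "norm_lex_less y w" "y \<noteq> 0" for y
    using w_min[of y] that by simp
  have "f (- w)"
    using add_subgroup_uminus[OF H] w by simp
  moreover have "- w \<noteq> 0"
    using w by simp
  ultimately have "\<not> norm_lex_less (- w) w"
    using minimal by blast
  moreover have "- w \<noteq> w"
    using w by (auto simp: prod_eq_iff)
  ultimately have "w \<in> least_candidates"
    using w norm_lex_less_linear unfolding least_candidates_def by blast
  moreover have "f \<in> subgroups_with_least w"
    using f w minimal unfolding subgroups_with_least_def by blast
  ultimately show thesis
    using that by blast
qed

lemma Union_subgroups_with_least:
  "(\<Union>w\<in>least_candidates. subgroups_with_least w) = topspace chabauty - {\<lambda>x. x = 0}"
proof (intro equalityI subsetI)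
  fix f :: "int \<times> int \<Rightarrow> bool"
  assume "f \<in> (\<Union>w\<in>least_candidates. subgroups_with_least w)"
  then obtain w where "w \<in> least_candidates" and f: "f \<in> subgroups_with_least w"
    by blast
  then have "f \<noteq> (\<lambda>x. x = 0)"
    using zero_subgroup_notin_subgroups_with_least by (metis least_candidates_def mem_Collect_eq)
  moreover have "f \<in> topspace chabauty"
    using f by (simp add: subgroups_with_least_def)
  ultimately show "f \<in> topspace chabauty - {\<lambda>x. x = 0}"
    by simp
next
  fix f :: "int \<times> int \<Rightarrow> bool"
  assume "f \<in> topspace chabauty - {\<lambda>x. x = 0}"
  then have "f \<in> topspace chabauty" and "f \<noteq> (\<lambda>x. x = 0)"
    by simp_all
  then obtain w where "w \<in> least_candidates" and "f \<in> subgroups_with_least w"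
    by (rule in_subgroups_with_least)
  then show "f \<in> (\<Union>w\<in>least_candidates. subgroups_with_least w)"
    by blast
qed

lemma add_subgroup_sublattice: "add_subgroup {x. sublattice w n x}"
  unfolding add_subgroup_def
proof (intro conjI ballI)
  show "0 \<in> {x. sublattice w n x}"
    unfolding sublattice_def by (rule CollectI, rule exI[of _ 0], rule exI[of _ 0]) simp
next
  fix x y
  assume "x \<in> {x. sublattice w n x}" "y \<in> {x. sublattice w n x}"
  then obtain k m k' m' where "x = smul k w + smul (m * int n) (perp w)"
    and "y = smul k' w + smul (m' * int n) (perp w)"
    unfolding sublattice_def by blast
  then have "x + y = smul (k + k') w + smul ((m + m') * int n) (perp w)"
    by (simp add: smul_add_left distrib_right)
  then show "x + y \<in> {x. sublattice w n x}"
    unfolding sublattice_def by blast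
next
  fix x
  assume "x \<in> {x. sublattice w n x}"
  then obtain k m where "x = smul k w + smul (m * int n) (perp w)"
    unfolding sublattice_def by blast
  then have "- x = smul (- k) w + smul ((- m) * int n) (perp w)"
    by (simp add: smul_minus_left)
  then show "- x \<in> {x. sublattice w n x}"
    unfolding sublattice_def by blast
qed

lemma not_norm_lex_less_lattice_vector:
  assumes w: "w \<in> least_candidates" and nonzero: "smul k w + smul j (perp w) \<noteq> 0"
    and j: "j = 0 \<or> 2 \<le> \<bar>j\<bar>"
  shows "\<not> norm_lex_less (smul k w + smul j (perp w)) w"
proof
  assume less: "norm_lex_less (smul k w + smul j (perp w)) w"
  have "0 < sqnorm w"
    using w by (simp add: least_candidates_def sqnorm_pos)
  moreover have "(k\<^sup>2 + j\<^sup>2) * sqnorm w \<le> 1 * sqnorm w"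
    using norm_lex_less_imp_sqnorm_le[OF less] by (simp add: sqnorm_smul_add_smul_perp)
  ultimately have small: "k\<^sup>2 + j\<^sup>2 \<le> 1"
    by (simp add: mult_le_cancel_right)
  have "j = 0"
    using j small abs_le_square_int[of j] zero_le_power2[of k] by linarith
  then have "\<bar>k\<bar> \<le> 1"
    using small abs_le_square_int[of k] by simp
  then have "k = 0 \<or> k = 1 \<or> k = - 1"
    by auto
  moreover have "\<not> norm_lex_less (- w) w"
    using w norm_lex_less_trans[of w "- w" w] norm_lex_less_irrefl[of w]
    unfolding least_candidates_def by blast
  ultimately show False
    using nonzero less \<open>j = 0\<close> norm_lex_less_irrefl[of w] by (elim disjE) simp_all
qed

lemma sublattice_in_subgroups_with_least:
  assumes w: "w \<in> least_candidates" and n: "n \<noteq> 1"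
  shows "sublattice w n \<in> subgroups_with_least w"
proof -
  have "\<not> sublattice w n y" if "y \<noteq> 0" and "norm_lex_less y w" for y
  proof
    assume "sublattice w n y"
    then obtain k m where y: "y = smul k w + smul (m * int n) (perp w)"
      unfolding sublattice_def by blast
    have "m * int n = 0 \<or> 2 \<le> \<bar>m * int n\<bar>"
    proof (cases "m = 0 \<or> n = 0")
      case False
      then have "1 \<le> \<bar>m\<bar>" and "2 \<le> int n"
        using n by auto
      then have "1 * 2 \<le> \<bar>m * int n\<bar>"
        unfolding abs_mult by (intro mult_mono) auto
      then show ?thesis
        by simp
    qed auto
    then show False
      using not_norm_lex_less_lattice_vector[OF w] that y by blast
  qed
  moreover have "sublattice w n w"
    unfolding sublattice_def by (rule exI[of _ 1], rule exI[of _ 0]) simp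
  ultimately show ?thesis
    using add_subgroup_sublattice by (simp add: subgroups_with_least_def topspace_chabauty)
qed

lemma smul_add_smul_perp_eq_iff:
  assumes "w \<noteq> 0"
  shows "smul k w + smul j (perp w) = smul k' w + smul j' (perp w) \<longleftrightarrow> k = k' \<and> j = j'"
proof
  assume "smul k w + smul j (perp w) = smul k' w + smul j' (perp w)"
  then have "smul (k - k') w + smul (j - j') (perp w) = 0"
    by (simp add: smul_def perp_def prod_eq_iff algebra_simps)
  then have "sqnorm (smul (k - k') w + smul (j - j') (perp w)) = 0"
    by (simp add: sqnorm_def)
  then have "((k - k')\<^sup>2 + (j - j')\<^sup>2) * sqnorm w = 0"
    by (simp only: sqnorm_smul_add_smul_perp)
  then show "k = k' \<and> j = j'"
    using sqnorm_pos[OF assms] by simp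
qed simp

lemma inj_sublattice:
  assumes "w \<noteq> 0"
  shows "inj (sublattice w)"
proof (rule injI)
  have dvd: "int n' dvd int n" if "sublattice w n = sublattice w n'" for n n'
  proof -
    have "sublattice w n (smul 0 w + smul (1 * int n) (perp w))"
      unfolding sublattice_def by blast
    then have "sublattice w n' (smul (int n) (perp w))"
      using that by simp
    then obtain k m where "smul (int n) (perp w) = smul k w + smul (m * int n') (perp w)"
      unfolding sublattice_def by blast
    then have "int n = m * int n'"
      using smul_add_smul_perp_eq_iff[OF assms, of 0 "int n" k "m * int n'"] by simp
    then show ?thesis
      by simp
  qed
  fix n n'
  assume "sublattice w n = sublattice w n'"
  then show "n = n'"
    using dvd[of n n'] dvd[of n' n] by (simp add: dvd_antisym)
qed

lemma infinite_subgroups_with_least: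
  assumes "w \<in> least_candidates"
  shows "infinite (subgroups_with_least w)"
proof
  assume "finite (subgroups_with_least w)"
  moreover have "sublattice w ` {2..} \<subseteq> subgroups_with_least w"
    using sublattice_in_subgroups_with_least[OF assms] by auto
  ultimately have "finite (sublattice w ` {2..})"
    by (rule finite_subset[rotated])
  moreover have "inj_on (sublattice w) {2..}"
    using inj_sublattice assms inj_on_subset unfolding least_candidates_def by blast
  ultimately show False
    by (simp add: finite_image_iff infinite_Ici)
qed

text \<open>Division with remainder along the line of \<open>w\<close>: with \<open>N = |w|\<^sup>2\<close> and
  \<open>c = \<langle>x, w\<rangle>\<close> we have \<open>N x = c w\<close>, so \<open>x - (c div N) w\<close> lies in the subgroup and is
  shorter than \<open>w\<close>, hence zero.\<close>
lemma multiple_if_parallel: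
  assumes f: "f \<in> subgroups_with_least w" and "w \<noteq> 0" and "f x" and parallel: "det2 x w = 0"
  shows "\<exists>k. x = smul k w"
proof -
  define N where "N = sqnorm w"
  define c where "c = fst x * fst w + snd x * snd w"
  define y where "y = x - smul (c div N) w"
  have N: "0 < N"
    using assms by (simp add: N_def sqnorm_pos)
  have "smul N x - smul c w = smul (det2 x w) (snd w, - fst w)"
    by (simp add: smul_def N_def c_def det2_def sqnorm_def prod_eq_iff power2_eq_square algebra_simps)
  then have "smul N x = smul c w"
    using parallel by simp
  then have "smul N y = smul (c mod N) w"
    by (simp add: y_def smul_def prod_eq_iff right_diff_distrib minus_mult_div_eq_mod[symmetric] algebra_simps)
  then have "N * (N * sqnorm y) = N * (c mod N)\<^sup>2"
    using sqnorm_smul[of N y] sqnorm_smul[of "c mod N" w] by (simp add: N_def power2_eq_square)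
  then have "N * sqnorm y = (c mod N)\<^sup>2"
    using N by simp
  also have "\<dots> < N * N"
    using N by (simp add: power2_eq_square mult_strict_mono)
  finally have "sqnorm y < N"
    using N by simp
  moreover have "f y"
  proof -
    have H: "add_subgroup {x. f x}" and "f w"
      using f by (simp_all add: subgroups_with_least_def topspace_chabauty)
    then show ?thesis
      using \<open>f x\<close> add_subgroup_diff[OF H] add_subgroup_smul[OF H] by (simp add: y_def)
  qed
  ultimately have "y = 0"
    using f unfolding subgroups_with_least_def norm_lex_less_def N_def by blast
  then have "x = smul (c div N) w"
    by (simp add: y_def)
  then show ?thesis ..
qed

lemma full_rank_unless_cyclic:
  assumes f: "f \<in> subgroups_with_least w" and "w \<noteq> 0" and "f \<noteq> sublattice w 0"
  shows "f \<in> full_rank_subgroups"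
proof -
  have H: "add_subgroup {x. f x}" and "f w" and "f \<in> topspace chabauty"
    using f by (simp_all add: subgroups_with_least_def topspace_chabauty)
  have cyclic: "sublattice w 0 x \<longleftrightarrow> (\<exists>k. x = smul k w)" for x
    by (simp add: sublattice_def)
  have "\<exists>u. f u \<and> det2 u w \<noteq> 0"
  proof (rule ccontr)
    assume no_u: "\<nexists>u. f u \<and> det2 u w \<noteq> 0"
    have "f x = sublattice w 0 x" for x
    proof
      assume "f x"
      then have "det2 x w = 0"
        using no_u by blast
      then show "sublattice w 0 x"
        using multiple_if_parallel[OF f \<open>w \<noteq> 0\<close> \<open>f x\<close>] cyclic by simp
    next
      assume "sublattice w 0 x"
      then obtain k where "x = smul k w"
        using cyclic by blast
      then show "f x"
        using add_subgroup_smul[OF H, of w k] \<open>f w\<close> by simp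
    qed
    then have "f = sublattice w 0"
      by (rule ext)
    then show False
      using assms(3) by contradiction
  qed
  then obtain u where "f u" and "det2 u w \<noteq> 0"
    by blast
  then show ?thesis
    unfolding full_rank_subgroups_def using \<open>f \<in> topspace chabauty\<close> \<open>f w\<close> by blast
qed

lemma homeomorphic_space_subgroups_with_least:
  assumes w: "w \<in> least_candidates"
  shows "(euclidean :: enat topology) homeomorphic_space subtopology chabauty (subgroups_with_least w)"
proof (rule homeomorphic_space_enat[where q = "sublattice w 0"])
  have top: "topspace (subtopology chabauty (subgroups_with_least w)) = subgroups_with_least w"
    using openin_subset[OF openin_subgroups_with_least] by (simp add: Int_absorb1)
  have "w \<noteq> 0"
    using w by (simp add: least_candidates_def)
  show "compact_space (subtopology chabauty (subgroups_with_least w))"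
    by (intro compact_space_subtopology closedin_compact_space compact_space_chabauty
        closedin_subgroups_with_least)
  show "Hausdorff_space (subtopology chabauty (subgroups_with_least w))"
    by (intro Hausdorff_space_subtopology Hausdorff_space_chabauty)
  show "sublattice w 0 \<in> topspace (subtopology chabauty (subgroups_with_least w))"
    using top sublattice_in_subgroups_with_least[OF w] by simp
  have "subgroups_with_least w \<subseteq> insert (sublattice w 0) full_rank_subgroups"
    using full_rank_unless_cyclic \<open>w \<noteq> 0\<close> by blast
  then show "countable (topspace (subtopology chabauty (subgroups_with_least w)))"
    unfolding top by (rule countable_subset) (simp add: countable_full_rank_subgroups)
  show "infinite (topspace (subtopology chabauty (subgroups_with_least w)))"
    using top infinite_subgroups_with_least[OF w] by simp
  show "openin (subtopology chabauty (subgroups_with_least w)) {f}"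
    if "f \<in> topspace (subtopology chabauty (subgroups_with_least w))" and "f \<noteq> sublattice w 0" for f
  proof -
    have "f \<in> subgroups_with_least w"
      using that(1) top by simp
    then have "openin chabauty {f}"
      using full_rank_unless_cyclic \<open>w \<noteq> 0\<close> that(2) openin_chabauty_full_rank by blast
    then show ?thesis
      using that top by (simp add: subset_openin_subtopology)
  qed
qed

lemma infinite_least_candidates: "infinite least_candidates"
proof -
  have "range (\<lambda>k::nat. (- int k - 1, 0 :: int)) \<subseteq> least_candidates"
    by (auto simp: least_candidates_def norm_lex_less_def sqnorm_def zero_prod_def)
  moreover have "inj (\<lambda>k::nat. (- int k - 1, 0 :: int))"
    by (rule injI) simp
  ultimately show ?thesis
    by (rule infinite_super[OF _ range_inj_infinite])
qed

lemma chabauty_int2_decomposition: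
  obtains Xs :: "nat \<Rightarrow> (int \<times> int \<Rightarrow> bool) set"
  where "\<And>n. openin chabauty (Xs n)" and "\<And>n. closedin chabauty (Xs n)"
    and "disjoint_family Xs" and "(\<Union>n. Xs n) = topspace chabauty - {\<lambda>x. x = 0}"
    and "\<And>n. (euclidean :: enat topology) homeomorphic_space subtopology chabauty (Xs n)"
proof -
  obtain e :: "nat \<Rightarrow> int \<times> int" where e: "bij_betw e UNIV least_candidates"
    using bij_betw_from_nat_into[OF countableI_type infinite_least_candidates] by blast
  then have e_in: "e n \<in> least_candidates" for n
    using bij_betwE by blast
  show thesis
  proof (rule that[of "\<lambda>n. subgroups_with_least (e n)"])
    show "disjoint_family (\<lambda>n. subgroups_with_least (e n))"
      unfolding disjoint_family_on_def
    proof (intro ballI impI)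
      fix m n :: nat
      have "e m \<noteq> 0" and "e n \<noteq> 0"
        using e_in[of m] e_in[of n] by (simp_all add: least_candidates_def)
      moreover assume "m \<noteq> n"
      then have "e m \<noteq> e n"
        using e by (simp add: bij_betw_def inj_eq)
      ultimately show "subgroups_with_least (e m) \<inter> subgroups_with_least (e n) = {}"
        by (rule subgroups_with_least_disjoint)
    qed
    have "(\<Union>n. subgroups_with_least (e n)) = (\<Union>w\<in>range e. subgroups_with_least w)"
      by auto
    also have "\<dots> = topspace chabauty - {\<lambda>x. x = 0}"
      using e Union_subgroups_with_least by (simp add: bij_betw_def)
    finally show "(\<Union>n. subgroups_with_least (e n)) = topspace chabauty - {\<lambda>x. x = 0}" .
    show "(euclidean :: enat topology) homeomorphic_space subtopology chabauty (subgroups_with_least (e n))"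
      for n by (rule homeomorphic_space_subgroups_with_least[OF e_in])
  qed (simp_all add: openin_subgroups_with_least closedin_subgroups_with_least)
qed

theorem corollary2:
  shows "(chabauty :: (int \<times> int \<Rightarrow> bool) topology) homeomorphic_space
           prod_topology (euclidean :: enat topology) (euclidean :: enat topology)"
proof -
  obtain Xs :: "nat \<Rightarrow> (int \<times> int \<Rightarrow> bool) set"
    where Xs: "\<And>n. openin chabauty (Xs n)" "\<And>n. closedin chabauty (Xs n)"
    "disjoint_family Xs" "(\<Union>n. Xs n) = topspace chabauty - {\<lambda>x. x = 0}"
    "\<And>n. (euclidean :: enat topology) homeomorphic_space subtopology chabauty (Xs n)"
    using chabauty_int2_decomposition by blast
  have "(chabauty :: (int \<times> int \<Rightarrow> bool) topology) homeomorphic_space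
      (euclidean :: (enat \<times> enat) topology)"
  proof (rule homeomorphic_space_glue_at_point[OF compact_space_chabauty Hausdorff_space_euclidean_t2
        _ _ Xs(1-4) enat2_piece_disjoint])
    show "(\<lambda>x. x = 0) \<in> topspace chabauty"
      by (simp add: topspace_chabauty add_subgroup_def)
    show "(\<Union>n. enat2_piece n) = topspace euclidean - {(\<infinity>, \<infinity>)}"
      using Union_enat2_piece by simp
    show "finite {n. \<not> enat2_piece n \<subseteq> V}" if "openin euclidean V" and "(\<infinity>, \<infinity>) \<in> V" for V
      using enat2_piece_tendsto that open_openin by blast
    have "subtopology chabauty (Xs n) homeomorphic_space (euclidean :: enat topology)" for n
      using Xs(5) by (rule homeomorphic_space_sym[THEN iffD1])
    then show "subtopology chabauty (Xs n) homeomorphic_space subtopology euclidean (enat2_piece n)" for n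
      using homeomorphic_space_enat2_piece by (rule homeomorphic_space_trans)
  qed simp
  then show ?thesis
    unfolding prod_topology_euclidean .
qed

end
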